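(* Consider the online tolling setting described in the context, with O-D pairs and values of time drawn i.i.d. across periods $t\in[T]$ from a distribution $\mathcal{D}$ whose support has nonnegative values of time. Let $\bm{\pi}$ be the toll-update algorithm with step size $\gamma=1/\sqrt{T}$: $\boldsymbol{\tau}^{(1)}=\bm{0}$, in each period $t$ the users play an equilibrium under $\boldsymbol{\tau}^{(t)}$ with resulting edge flows $\bm{x}^t$, and $\boldsymbol{\tau}^{(t+1)}=(\boldsymbol{\tau}^{(t)}-\gamma(\bm{c}-\bm{x}^t))_+$ componentwise. Then its expected regret and expected constraint violation satisfy $$R_T(\bm{\pi})\le\frac{|E|\,(|\mathcal{U}|+\max_{e\in E}c_e)^2}{2}\sqrt{T},\qquad V_T(\bm{\pi})\le |E|\,\big(\max_{u\in\mathcal{U}}\lambda_u+\max_{e\in E}c_e+|\mathcal{U}|\big)\sqrt{T}.$$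
   Context: Network: directed graph $G=(V,E)$, edge capacities $\bm{c}=\{c_e\}_{e\in E}$ with $c_e\ge0$, fixed edge travel times $l_e\ge 0$; for a path $P$, $l_P=\sum_{e\in P}l_e$. A finite set $\mathcal{U}$ of users; user $u$ has a fixed outside-option cost $\lambda_u\ge 0$. In each period $t=1,\dots,T$ the vector $(\bm{w}^t,\bm{v}^t)=((w^t_u)_{u\in\mathcal{U}},(v^t_u)_{u\in\mathcal{U}})$ of O-D pairs and values of time is drawn i.i.d. from $\mathcal{D}$; $\mathcal{P}^t_u$ is the finite set of paths connecting $w^t_u$. Given nonnegative tolls $\boldsymbol{\tau}=\{\tau_e\}$, user $u$'s cost of path $P$ in period $t$ is $v^t_ul_P+\sum_{e\in P}\tau_e$, and an equilibrium is an assignment of each user to exactly one of a path in $\mathcal{P}^t_u$ or the outside option (binary $f^t_{P,u}$, $f^t_{o,u}$ summing to 1) that minimizes this cost among paths and the outside option (ties broken arbitrarily); edge flows are $x^t_e=\sum_{u}\sum_{P\in\mathcal{P}^t_u:e\in P}f^t_{P,u}$ (capacities need not be respected). A tolling policy chooses $\boldsymbol{\tau}^{(t)}$ as a function only of $\bm{x}^1,\dots,\bm{x}^{t-1}$. The total system cost in period $t$ is $U_t=\sum_u\big(v^t_u\sum_{P\in\mathcal{P}^t_u}l_Pf^t_{P,u}+\lambda_uf^t_{o,u}\big)$, and $U^*_t$ is the optimal value of $\min\sum_u(v^t_u\sum_{P}l_Pf_{P,u}+\lambda_uf_{o,u})$ over binary assignments with $\sum_Pf_{P,u}+f_{o,u}=1$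 for each $u$ and $\sum_u\sum_{P\ni e}f_{P,u}\le c_e$ for each $e$ (the offline optimum with full knowledge of period-$t$ data). Regret: $R_T(\bm{\pi})=\mathbb{E}[\sum_{t=1}^T(U_t-U^*_t)]$. Constraint violation: $V_T(\bm{\pi})=\mathbb{E}\big[\|(\sum_{t=1}^T(\bm{x}^t-\bm{c}))_+\|_2\big]$, with $(\cdot)_+$ the componentwise positive part. Expectations are over $\mathcal{D}$. *)

theory Defs
  imports "HOL-Probability.Probability"
begin

text \<open>A scenario (one period's data) is a pair (w, v): O-D pair w u and value of time v u
  for every user u. An assignment maps each user to either a path (Some P) or the
  outside option (None).\<close>

type_synonym ('u, 'v) scen = "('u \<Rightarrow> 'v \<times> 'v) \<times> ('u \<Rightarrow> real)"
type_synonym ('u, 'e) assign = "'u \<Rightarrow> 'e list option"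

definition simple_path :: "('e \<Rightarrow> 'v) \<Rightarrow> ('e \<Rightarrow> 'v) \<Rightarrow> 'v \<Rightarrow> 'v \<Rightarrow> 'e list \<Rightarrow> bool" where
  "simple_path src dst a b P \<longleftrightarrow>
     (P = [] \<and> a = b) \<or>
     (P \<noteq> [] \<and> src (hd P) = a \<and> dst (last P) = b \<and>
      (\<forall>i. Suc i < length P \<longrightarrow> dst (P ! i) = src (P ! Suc i)) \<and>
      distinct (src (hd P) # map dst P))"

definition od_paths :: "('e \<Rightarrow> 'v) \<Rightarrow> ('e \<Rightarrow> 'v) \<Rightarrow> 'v \<times> 'v \<Rightarrow> 'e list set" where
  "od_paths src dst w = {P. simple_path src dst (fst w) (snd w) P}"

definition path_len :: "('e \<Rightarrow> real) \<Rightarrow> 'e list \<Rightarrow> real" where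
  "path_len l P = (\<Sum>e\<leftarrow>P. l e)"

definition option_cost :: "('e \<Rightarrow> real) \<Rightarrow> ('u \<Rightarrow> real) \<Rightarrow> ('e \<Rightarrow> real) \<Rightarrow> ('u, 'v) scen
    \<Rightarrow> 'u \<Rightarrow> 'e list option \<Rightarrow> real" where
  "option_cost l lam tau s u ch =
     (case ch of None \<Rightarrow> lam u | Some P \<Rightarrow> snd s u * path_len l P + (\<Sum>e\<leftarrow>P. tau e))"

definition valid_assign :: "('e \<Rightarrow> 'v) \<Rightarrow> ('e \<Rightarrow> 'v) \<Rightarrow> ('u, 'v) scen \<Rightarrow> ('u, 'e) assign \<Rightarrow> bool" where
  "valid_assign src dst s f \<longleftrightarrow> (\<forall>u P. f u = Some P \<longrightarrow> P \<in> od_paths src dst (fst s u))"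

definition is_equilibrium :: "('e \<Rightarrow> 'v) \<Rightarrow> ('e \<Rightarrow> 'v) \<Rightarrow> ('e \<Rightarrow> real) \<Rightarrow> ('u \<Rightarrow> real)
    \<Rightarrow> ('e \<Rightarrow> real) \<Rightarrow> ('u, 'v) scen \<Rightarrow> ('u, 'e) assign \<Rightarrow> bool" where
  "is_equilibrium src dst l lam tau s f \<longleftrightarrow>
     valid_assign src dst s f \<and>
     (\<forall>u. (\<forall>P \<in> od_paths src dst (fst s u).
             option_cost l lam tau s u (f u) \<le> option_cost l lam tau s u (Some P)) \<and>
          option_cost l lam tau s u (f u) \<le> option_cost l lam tau s u None)"

definition edge_flow :: "('u, 'e) assign \<Rightarrow> 'e \<Rightarrow> real" where
  "edge_flow f e = real (card {u. \<exists>P. f u = Some P \<and> e \<in> set P})"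

definition sys_cost :: "('e \<Rightarrow> real) \<Rightarrow> ('u \<Rightarrow> real) \<Rightarrow> ('u, 'v) scen \<Rightarrow> ('u, 'e) assign \<Rightarrow> real" where
  "sys_cost l lam s f =
     (\<Sum>u\<in>UNIV. case f u of None \<Rightarrow> lam u | Some P \<Rightarrow> snd s u * path_len l P)"

definition opt_cost :: "('e \<Rightarrow> 'v) \<Rightarrow> ('e \<Rightarrow> 'v) \<Rightarrow> ('e \<Rightarrow> real) \<Rightarrow> ('u \<Rightarrow> real)
    \<Rightarrow> ('e \<Rightarrow> real) \<Rightarrow> ('u, 'v) scen \<Rightarrow> real" where
  "opt_cost src dst l lam c s =
     Min {sys_cost l lam s f | f. valid_assign src dst s f \<and> (\<forall>e. edge_flow f e \<le> c e)}"

text \<open>Toll sequence (periods indexed from 0): toll_seq .. 0 = 0, and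
  toll_seq .. (t+1) = (toll_seq .. t - gamma (c - x^t))_+ where x^t is the flow of the
  assignment A t (toll_seq .. t) played in period t.\<close>
primrec toll_seq :: "real \<Rightarrow> ('e \<Rightarrow> real) \<Rightarrow> (nat \<Rightarrow> ('e \<Rightarrow> real) \<Rightarrow> ('u, 'e) assign)
    \<Rightarrow> nat \<Rightarrow> 'e \<Rightarrow> real" where
  "toll_seq gamma c A 0 = (\<lambda>e. 0)"
| "toll_seq gamma c A (Suc t) =
     (\<lambda>e. max 0 (toll_seq gamma c A t e - gamma * (c e - edge_flow (A t (toll_seq gamma c A t)) e)))"

text \<open>Assignment played in period t along sample path omega, given the
  tie-breaking rule sel (sel t omega tau = equilibrium chosen in period t under tolls tau).\<close>
definition played :: "(nat \<Rightarrow> (nat \<Rightarrow> ('u, 'v) scen) \<Rightarrow> ('e \<Rightarrow> real) \<Rightarrow> ('u, 'e) assign)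
    \<Rightarrow> real \<Rightarrow> ('e \<Rightarrow> real) \<Rightarrow> (nat \<Rightarrow> ('u, 'v) scen) \<Rightarrow> nat \<Rightarrow> ('u, 'e) assign" where
  "played sel gamma c omega t = sel t omega (toll_seq gamma c (\<lambda>k. sel k omega) t)"

end

theory Submission
  imports Defs
begin

text \<open>The tolls perform projected gradient steps on the Lagrangian dual of the
  capacitated assignment problem, with per-period gradient \<open>c - x\<^sup>t\<close>. An equilibrium under
  tolls \<open>\<tau>\<close> minimises the toll-inclusive cost, so by weak duality the regret of period \<open>t\<close> is
  at most \<open>\<Sum>\<^sub>e \<tau>\<^sub>e (c\<^sub>e - x\<^sup>t\<^sub>e)\<close>; the usual potential argument for projected gradient
  steps bounds the sum of these by \<open>\<gamma>/2 \<Sum>\<^sub>t \<parallel>c - x\<^sup>t\<parallel>\<^sup>2 \<le> \<gamma> T |E| (|U| + max c)\<^sup>2 / 2\<close>.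
  For the violation, the toll on an edge dominates \<open>\<gamma>\<close> times the cumulative excess flow on
  it, and it never exceeds \<open>max \<lambda> + \<gamma> |U|\<close>: once it is above every outside-option cost
  nobody uses the edge and the toll stops rising. Both bounds hold on every sample path,
  hence in expectation.\<close>

lemma (in prob_space) integral_le_nonneg_const:
  fixes f :: "'a \<Rightarrow> real"
  assumes "AE x in M. f x \<le> c" and "0 \<le> c"
  shows "integral\<^sup>L M f \<le> c"
  using assms by (cases "integrable M f") (simp_all add: integral_le_const not_integrable_integral_eq)

lemma AE_PiM_all_components:
  assumes "finite I" and "\<And>i. i \<in> I \<Longrightarrow> prob_space (M i)"
    and "\<And>i. i \<in> I \<Longrightarrow> AE x in M i. P i x"
  shows "AE x in PiM I M. \<forall>i\<in>I. P i (x i)"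
  using assms by (intro eventually_ball_finite ballI AE_PiM_component) auto

lemma Max_range_nonneg:
  fixes f :: "'a::finite \<Rightarrow> 'b::{linorder, zero}"
  assumes "\<And>x. 0 \<le> f x"
  shows "0 \<le> Max (range f)"
proof -
  have "f undefined \<le> Max (range f)" by simp
  then show ?thesis using assms[of undefined] by order
qed

lemma projected_descent_potential:
  fixes x d :: "nat \<Rightarrow> real"
  assumes x0: "x 0 = 0" and x_Suc: "\<And>t. x (Suc t) = max 0 (x t - g * d t)"
  shows "2 * g * (\<Sum>t<n. x t * d t) + (x n)\<^sup>2 \<le> g\<^sup>2 * (\<Sum>t<n. (d t)\<^sup>2)"
proof (induction n)
  case 0
  then show ?case by (simp add: x0)
next
  case (Suc n)
  have "(x (Suc n))\<^sup>2 \<le> (x n - g * d n)\<^sup>2"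
    unfolding x_Suc by (cases "0 \<le> x n - g * d n") (auto simp: max_def)
  also have "\<dots> = (x n)\<^sup>2 - 2 * g * (x n * d n) + g\<^sup>2 * (d n)\<^sup>2"
    by (simp add: power2_eq_square algebra_simps)
  finally show ?case using Suc.IH by (simp add: algebra_simps)
qed

lemma projected_descent_ge:
  fixes x d :: "nat \<Rightarrow> real"
  assumes x0: "x 0 = 0" and x_Suc: "\<And>t. x (Suc t) = max 0 (x t - g * d t)"
  shows "g * (\<Sum>t<n. - d t) \<le> x n"
proof (induction n)
  case 0
  then show ?case by (simp add: x0)
next
  case (Suc n)
  then show ?case by (simp add: x_Suc algebra_simps)
qed

lemma projected_descent_le:
  fixes x d :: "nat \<Rightarrow> real"
  assumes x0: "x 0 = 0" and x_Suc: "\<And>t. x (Suc t) = max 0 (x t - g * d t)"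
    and g: "0 \<le> g" and M: "0 \<le> M" and K: "0 \<le> K"
    and d_ge: "\<And>t. t < n \<Longrightarrow> - K \<le> d t"
    and d_nonneg: "\<And>t. t < n \<Longrightarrow> M < x t \<Longrightarrow> 0 \<le> d t"
  shows "x n \<le> M + g * K"
  using d_ge d_nonneg
proof (induction n)
  case 0
  then show ?case using M K g by (simp add: x0)
next
  case (Suc n)
  have IH: "x n \<le> M + g * K" using Suc by simp
  have bound_nonneg: "0 \<le> M + g * K" using M K g by simp
  show ?case
  proof (cases "M < x n")
    case True
    then have "0 \<le> g * d n" using Suc.prems(2)[of n] g by simp
    then show ?thesis using IH bound_nonneg by (simp add: x_Suc)
  next
    case False
    have "g * - K \<le> g * d n" using Suc.prems(1)[of n] g by (intro mult_left_mono) auto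
    then show ?thesis using False bound_nonneg by (simp add: x_Suc)
  qed
qed

lemma od_paths_distinct: "P \<in> od_paths src dst w \<Longrightarrow> distinct P"
  unfolding od_paths_def simple_path_def by (auto simp: distinct_map)

lemma path_len_nonneg:
  assumes "\<And>e. 0 \<le> l e"
  shows "0 \<le> path_len l P"
  unfolding path_len_def using assms by (induction P) auto

lemma edge_flow_le_card: "edge_flow (f :: ('u::finite, 'e) assign) e \<le> real CARD('u)"
  unfolding edge_flow_def by (simp add: card_mono)

lemma abs_capacity_slack_le:
  fixes f :: "('u::finite, 'e::finite) assign"
  assumes "0 \<le> c e"
  shows "\<bar>c e - edge_flow f e\<bar> \<le> real CARD('u) + Max (range c)"
proof -
  have "c e \<le> Max (range c)" by simp
  moreover have "0 \<le> edge_flow f e" by (simp add: edge_flow_def)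
  ultimately show ?thesis using assms edge_flow_le_card[of f e] by linarith
qed

lemma toll_seq_nonneg: "0 \<le> toll_seq g c A t e"
  by (cases t) auto

text \<open>Paths are simple, so the list sum of tolls along a path is a sum over its edge set;
  exchanging the sums over users and edges then gives \<open>\<Sum>\<^sub>e \<tau>\<^sub>e x\<^sub>e\<close>.\<close>
lemma sum_option_cost_eq:
  fixes h :: "('u::finite, 'e::finite) assign"
  assumes "valid_assign src dst s h"
  shows "(\<Sum>u\<in>UNIV. option_cost l lam tau s u (h u))
       = sys_cost l lam s h + (\<Sum>e\<in>UNIV. tau e * edge_flow h e)"
proof -
  define S where "S u = (case h u of None \<Rightarrow> {} | Some P \<Rightarrow> set P)" for u
  have cost: "option_cost l lam tau s u (h u) =
      (case h u of None \<Rightarrow> lam u | Some P \<Rightarrow> snd s u * path_len l P) + (\<Sum>e\<in>S u. tau e)" for u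
  proof (cases "h u")
    case (Some P)
    then have "distinct P"
      using assms od_paths_distinct unfolding valid_assign_def by blast
    then show ?thesis
      using Some by (simp add: option_cost_def S_def sum_list_distinct_conv_sum_set)
  qed (simp add: option_cost_def S_def)
  have "(\<Sum>u\<in>UNIV. \<Sum>e\<in>S u. tau e) = (\<Sum>u\<in>UNIV. \<Sum>e\<in>UNIV. if e \<in> S u then tau e else 0)"
    by (simp add: sum.If_cases Int_absorb1)
  also have "\<dots> = (\<Sum>e\<in>UNIV. \<Sum>u\<in>UNIV. if e \<in> S u then tau e else 0)"
    by (rule sum.swap)
  also have "\<dots> = (\<Sum>e\<in>UNIV. tau e * edge_flow h e)"
  proof (rule sum.cong[OF refl])
    fix e
    have "{u. \<exists>P. h u = Some P \<and> e \<in> set P} = {u. e \<in> S u}"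
      by (auto simp: S_def split: option.splits)
    then show "(\<Sum>u\<in>UNIV. if e \<in> S u then tau e else 0) = tau e * edge_flow h e"
      by (simp add: sum.If_cases edge_flow_def)
  qed
  finally show ?thesis by (simp add: cost sum.distrib sys_cost_def)
qed

lemma equilibrium_sys_cost_gap_le:
  fixes f h :: "('u::finite, 'e::finite) assign"
  assumes eq: "is_equilibrium src dst l lam tau s f" and tau: "\<forall>e. 0 \<le> tau e"
    and h: "valid_assign src dst s h" and h_feasible: "\<forall>e. edge_flow h e \<le> c e"
  shows "sys_cost l lam s f - sys_cost l lam s h \<le> (\<Sum>e\<in>UNIV. tau e * (c e - edge_flow f e))"
proof -
  have f: "valid_assign src dst s f" using eq by (simp add: is_equilibrium_def)
  have "(\<Sum>u\<in>UNIV. option_cost l lam tau s u (f u)) \<le> (\<Sum>u\<in>UNIV. option_cost l lam tau s u (h u))"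
  proof (rule sum_mono)
    fix u
    show "option_cost l lam tau s u (f u) \<le> option_cost l lam tau s u (h u)"
      using eq h unfolding is_equilibrium_def valid_assign_def by (cases "h u") auto
  qed
  moreover have "(\<Sum>e\<in>UNIV. tau e * edge_flow h e) \<le> (\<Sum>e\<in>UNIV. tau e * c e)"
    using tau h_feasible by (intro sum_mono mult_left_mono) auto
  ultimately show ?thesis
    using sum_option_cost_eq[OF f, of l lam tau] sum_option_cost_eq[OF h, of l lam tau]
    by (simp add: right_diff_distrib sum_subtractf)
qed

lemma opt_cost_attained:
  fixes s :: "('u::finite, 'v) scen" and c :: "'e::finite \<Rightarrow> real"
  assumes "\<forall>e. 0 \<le> c e"
  obtains h where "valid_assign src dst s h" and "\<forall>e. edge_flow h e \<le> c e"
    and "opt_cost src dst l lam c s = sys_cost l lam s h"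
proof -
  let ?S = "{sys_cost l lam s f | f. valid_assign src dst s f \<and> (\<forall>e. edge_flow f e \<le> c e)}"
  let ?B = "insert None (Some ` {P::'e list. distinct P})"
  have "finite ?B" using finite_subset_distinct[of "UNIV::'e set"] by simp
  then have "finite (UNIV \<rightarrow>\<^sub>E ?B :: ('u, 'e) assign set)" by (simp add: finite_PiE)
  moreover have "?S \<subseteq> sys_cost l lam s ` (UNIV \<rightarrow>\<^sub>E ?B)"
  proof
    fix y assume "y \<in> ?S"
    then obtain f where y: "y = sys_cost l lam s f" and f: "valid_assign src dst s f" by blast
    have "f u \<in> ?B" for u
      using f od_paths_distinct[of _ src dst "fst s u"] unfolding valid_assign_def
      by (cases "f u") auto
    then show "y \<in> sys_cost l lam s ` (UNIV \<rightarrow>\<^sub>E ?B)" using y by auto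
  qed
  ultimately have "finite ?S" by (meson finite_imageI finite_subset)
  moreover have "sys_cost l lam s (\<lambda>_. None) \<in> ?S"
    using assms by (auto simp: valid_assign_def edge_flow_def)
  ultimately have "Min ?S \<in> ?S" by (intro Min_in) auto
  then show ?thesis using that unfolding opt_cost_def by blast
qed

lemma equilibrium_regret_le:
  fixes f :: "('u::finite, 'e::finite) assign"
  assumes eq: "is_equilibrium src dst l lam tau s f" and tau: "\<forall>e. 0 \<le> tau e"
    and c: "\<forall>e. 0 \<le> c e"
  shows "sys_cost l lam s f - opt_cost src dst l lam c s \<le> (\<Sum>e\<in>UNIV. tau e * (c e - edge_flow f e))"
proof -
  obtain h where "valid_assign src dst s h" "\<forall>e. edge_flow h e \<le> c e"
      and opt: "opt_cost src dst l lam c s = sys_cost l lam s h"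
    using opt_cost_attained[OF c] by blast
  with equilibrium_sys_cost_gap_le[OF eq tau] show ?thesis by simp
qed

lemma equilibrium_edge_flow_eq_0:
  fixes f :: "('u::finite, 'e) assign"
  assumes eq: "is_equilibrium src dst l lam tau s f" and tau: "\<forall>e. 0 \<le> tau e"
    and vot: "\<forall>u. 0 \<le> snd s u" and l: "\<forall>e. 0 \<le> l e" and expensive: "\<forall>u. lam u < tau e"
  shows "edge_flow f e = 0"
proof -
  have "\<not> (f u = Some P \<and> e \<in> set P)" for u P
  proof
    assume u: "f u = Some P \<and> e \<in> set P"
    then have "distinct P"
      using eq od_paths_distinct unfolding is_equilibrium_def valid_assign_def by blast
    then have "tau e \<le> (\<Sum>e\<leftarrow>P. tau e)"
      using u tau by (simp add: sum_list_distinct_conv_sum_set member_le_sum)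
    moreover have "0 \<le> snd s u * path_len l P" using vot l by (simp add: path_len_nonneg)
    moreover have "option_cost l lam tau s u (f u) \<le> option_cost l lam tau s u None"
      using eq unfolding is_equilibrium_def by blast
    ultimately show False using u expensive[rule_format, of u] by (simp add: option_cost_def)
  qed
  then show ?thesis by (simp add: edge_flow_def)
qed

lemma toll_seq_regret_le:
  fixes A :: "nat \<Rightarrow> ('e::finite \<Rightarrow> real) \<Rightarrow> ('u::finite, 'e) assign"
  assumes c: "\<forall>e. 0 \<le> c e" and g: "0 < g"
    and eq: "\<And>t tau. t < n \<Longrightarrow> \<forall>e. 0 \<le> tau e \<Longrightarrow> is_equilibrium src dst l lam tau (s t) (A t tau)"
  shows "(\<Sum>t<n. sys_cost l lam (s t) (A t (toll_seq g c A t)) - opt_cost src dst l lam c (s t))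
    \<le> real CARD('e) * (real CARD('u) + Max (range c))\<^sup>2 / 2 * (g * n)"
proof -
  let ?tau = "toll_seq g c A"
  define d where "d t e = c e - edge_flow (A t (?tau t)) e" for t e
  define B where "B = real CARD('u) + Max (range c)"
  have gap: "sys_cost l lam (s t) (A t (?tau t)) - opt_cost src dst l lam c (s t)
      \<le> (\<Sum>e\<in>UNIV. ?tau t e * d t e)" if "t < n" for t
  proof -
    have "\<forall>e. 0 \<le> ?tau t e" by (simp add: toll_seq_nonneg)
    from equilibrium_regret_le[OF eq[OF that this] this c] show ?thesis unfolding d_def .
  qed
  have per_edge: "(\<Sum>t<n. ?tau t e * d t e) \<le> B\<^sup>2 / 2 * (g * n)" for e
  proof -
    let ?S = "\<Sum>t<n. ?tau t e * d t e" and ?Q = "\<Sum>t<n. (d t e)\<^sup>2"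
    have "2 * g * ?S + (?tau n e)\<^sup>2 \<le> g\<^sup>2 * ?Q"
      by (rule projected_descent_potential) (simp_all add: d_def)
    then have "g * (2 * ?S) \<le> g * (g * ?Q)"
      using zero_le_power2[of "?tau n e"] by (simp only: power2_eq_square mult_ac)
    then have "2 * ?S \<le> g * ?Q"
      using g by (rule mult_left_le_imp_le)
    moreover have "?Q \<le> n * B\<^sup>2"
    proof -
      have "0 \<le> B" using c by (simp add: B_def Max_range_nonneg)
      then have "(d t e)\<^sup>2 \<le> B\<^sup>2" for t
        using abs_capacity_slack_le[of c e "A t (?tau t)"] c
        by (simp add: abs_le_square_iff[symmetric] d_def B_def)
      then show ?thesis using sum_mono[of "{..<n}" "\<lambda>t. (d t e)\<^sup>2" "\<lambda>_. B\<^sup>2"] by simp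
    qed
    then have "g * ?Q \<le> g * (n * B\<^sup>2)"
      using g by (simp add: mult_left_mono)
    moreover have "g * (n * B\<^sup>2) = 2 * (B\<^sup>2 / 2 * (g * n))" by simp
    ultimately show ?thesis by linarith
  qed
  have "(\<Sum>t<n. sys_cost l lam (s t) (A t (?tau t)) - opt_cost src dst l lam c (s t))
      \<le> (\<Sum>t<n. \<Sum>e\<in>UNIV. ?tau t e * d t e)"
    by (intro sum_mono gap) simp
  also have "\<dots> = (\<Sum>e\<in>UNIV. \<Sum>t<n. ?tau t e * d t e)"
    by (rule sum.swap)
  also have "\<dots> \<le> (\<Sum>e\<in>(UNIV::'e set). B\<^sup>2 / 2 * (g * n))"
    by (intro sum_mono per_edge)
  finally show ?thesis by (simp add: B_def)
qed

lemma toll_seq_excess_le: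
  fixes A :: "nat \<Rightarrow> ('e::finite \<Rightarrow> real) \<Rightarrow> ('u::finite, 'e) assign"
  assumes eq: "\<And>t tau. t < n \<Longrightarrow> \<forall>e. 0 \<le> tau e \<Longrightarrow> is_equilibrium src dst l lam tau (s t) (A t tau)"
    and vot: "\<And>t. t < n \<Longrightarrow> \<forall>u. 0 \<le> snd (s t) u" and l: "\<forall>e. 0 \<le> l e"
    and lam: "\<forall>u. 0 \<le> lam u" and c: "\<forall>e. 0 \<le> c e" and g: "0 \<le> g"
  shows "g * (\<Sum>t<n. edge_flow (A t (toll_seq g c A t)) e - c e)
    \<le> Max (range lam) + g * real CARD('u)"
proof -
  let ?tau = "toll_seq g c A"
  define d where "d t = c e - edge_flow (A t (?tau t)) e" for t
  have "g * (\<Sum>t<n. - d t) \<le> ?tau n e"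
    by (rule projected_descent_ge) (simp_all add: d_def)
  also have "\<dots> \<le> Max (range lam) + g * real CARD('u)"
  proof (rule projected_descent_le)
    show "- real CARD('u) \<le> d t" for t
      using c[rule_format, of e] edge_flow_le_card[of "A t (?tau t)" e] by (simp add: d_def)
    show "0 \<le> d t" if t: "t < n" and expensive: "Max (range lam) < ?tau t e" for t
    proof -
      have "lam u \<le> Max (range lam)" for u by simp
      then have "\<forall>u. lam u < ?tau t e" using expensive by (meson order_le_less_trans)
      moreover have tau: "\<forall>e. 0 \<le> ?tau t e" by (simp add: toll_seq_nonneg)
      ultimately have "edge_flow (A t (?tau t)) e = 0"
        using equilibrium_edge_flow_eq_0[OF eq[OF t tau] tau vot[OF t] l] by blast
      then show ?thesis using c by (simp add: d_def)
    qed
  qed (simp_all add: d_def g lam Max_range_nonneg)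
  finally show ?thesis by (simp add: d_def)
qed

lemma played_regret_le:
  fixes src dst :: "'e::finite \<Rightarrow> 'v" and lam :: "'u::finite \<Rightarrow> real"
    and sel :: "nat \<Rightarrow> (nat \<Rightarrow> ('u, 'v) scen) \<Rightarrow> ('e \<Rightarrow> real) \<Rightarrow> ('u, 'e) assign"
  assumes c: "\<forall>e. 0 \<le> c e"
    and sel_eq: "\<forall>t omega tau. (\<forall>e. 0 \<le> tau e) \<longrightarrow>
                   is_equilibrium src dst l lam tau (omega t) (sel t omega tau)"
  shows "(\<Sum>t<T. sys_cost l lam (omega t) (played sel (1 / sqrt T) c omega t)
                  - opt_cost src dst l lam c (omega t))
    \<le> real CARD('e) * (real CARD('u) + Max (range c))\<^sup>2 / 2 * sqrt T"
proof (cases "T = 0")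
  case False
  have "(\<Sum>t<T. sys_cost l lam (omega t) (played sel (1 / sqrt T) c omega t)
                  - opt_cost src dst l lam c (omega t))
    \<le> real CARD('e) * (real CARD('u) + Max (range c))\<^sup>2 / 2 * (1 / sqrt T * T)"
    unfolding played_def by (rule toll_seq_regret_le) (use c sel_eq False in auto)
  then show ?thesis by (simp add: real_div_sqrt)
qed simp

lemma played_violation_le:
  fixes src dst :: "'e::finite \<Rightarrow> 'v" and lam :: "'u::finite \<Rightarrow> real"
    and sel :: "nat \<Rightarrow> (nat \<Rightarrow> ('u, 'v) scen) \<Rightarrow> ('e \<Rightarrow> real) \<Rightarrow> ('u, 'e) assign"
  assumes sel_eq: "\<forall>t omega tau. (\<forall>e. 0 \<le> tau e) \<longrightarrow>
                   is_equilibrium src dst l lam tau (omega t) (sel t omega tau)"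
    and vot: "\<forall>t\<in>{..<T}. \<forall>u. 0 \<le> snd (omega t) u"
    and l: "\<forall>e. 0 \<le> l e" and lam: "\<forall>u. 0 \<le> lam u" and c: "\<forall>e. 0 \<le> c e"
  shows "sqrt (\<Sum>e\<in>UNIV. (max 0 (\<Sum>t<T. edge_flow (played sel (1 / sqrt T) c omega t) e - c e))\<^sup>2)
    \<le> real CARD('e) * (Max (range lam) + Max (range c) + real CARD('u)) * sqrt T"
proof -
  let ?excess = "\<lambda>e. \<Sum>t<T. edge_flow (played sel (1 / sqrt T) c omega t) e - c e"
  define K where "K = Max (range lam) + Max (range c) + real CARD('u)"
  have K: "0 \<le> K" using lam c by (simp add: K_def Max_range_nonneg)
  have excess: "?excess e \<le> K * sqrt T" for e
  proof (cases "T = 0")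
    case False
    have "1 / sqrt T * ?excess e \<le> Max (range lam) + 1 / sqrt T * real CARD('u)"
      unfolding played_def by (rule toll_seq_excess_le) (use sel_eq vot l lam c in auto)
    then have "?excess e \<le> Max (range lam) * sqrt T + real CARD('u)"
      using False by (simp add: field_simps)
    also have "\<dots> \<le> K * sqrt T"
    proof -
      have "real CARD('u) \<le> real CARD('u) * sqrt T"
        using mult_left_mono[of 1 "sqrt T" "real CARD('u)"] False by simp
      moreover have "0 \<le> Max (range c) * sqrt T" using c by (simp add: Max_range_nonneg)
      ultimately show ?thesis unfolding K_def distrib_right by linarith
    qed
    finally show ?thesis .
  qed simp
  have "sqrt (\<Sum>e\<in>UNIV. (max 0 (?excess e))\<^sup>2) = L2_set (\<lambda>e. max 0 (?excess e)) UNIV"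
    by (simp add: L2_set_def)
  also have "\<dots> \<le> (\<Sum>e\<in>UNIV. max 0 (?excess e))"
    by (rule L2_set_le_sum) simp
  also have "\<dots> \<le> (\<Sum>e\<in>(UNIV::'e set). K * sqrt T)"
    using excess K by (intro sum_mono) simp
  finally show ?thesis by (simp add: K_def)
qed

theorem theorem2:
  fixes src dst :: "'e::finite \<Rightarrow> 'v"
    and l c :: "'e \<Rightarrow> real"
    and lam :: "'u::finite \<Rightarrow> real"
    and D :: "('u, 'v) scen measure"
    and sel :: "nat \<Rightarrow> (nat \<Rightarrow> ('u, 'v) scen) \<Rightarrow> ('e \<Rightarrow> real) \<Rightarrow> ('u, 'e) assign"
    and T :: nat
  assumes D: "prob_space D"
    and vot_nonneg: "AE s in D. \<forall>u. 0 \<le> snd s u"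
    and c_nonneg: "\<forall>e. 0 \<le> c e"
    and l_nonneg: "\<forall>e. 0 \<le> l e"
    and lam_nonneg: "\<forall>u. 0 \<le> lam u"
    and sel_eq: "\<forall>t omega tau. (\<forall>e. 0 \<le> tau e) \<longrightarrow>
                   is_equilibrium src dst l lam tau (omega t) (sel t omega tau)"
  shows "integral\<^sup>L (PiM {..<T} (\<lambda>_. D))
           (\<lambda>omega. \<Sum>t<T. sys_cost l lam (omega t) (played sel (1 / sqrt T) c omega t)
                           - opt_cost src dst l lam c (omega t))
         \<le> real CARD('e) * (real CARD('u) + Max (range c))\<^sup>2 / 2 * sqrt T
       \<and> integral\<^sup>L (PiM {..<T} (\<lambda>_. D))
           (\<lambda>omega. sqrt (\<Sum>e\<in>UNIV. (max 0 (\<Sum>t<T. edge_flow (played sel (1 / sqrt T) c omega t) e - c e))\<^sup>2))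
         \<le> real CARD('e) * (Max (range lam) + Max (range c) + real CARD('u)) * sqrt T"
proof -
  interpret product: prob_space "PiM {..<T} (\<lambda>_. D)"
    using D by (intro prob_space_PiM)
  have vot: "AE omega in PiM {..<T} (\<lambda>_. D). \<forall>t\<in>{..<T}. \<forall>u. 0 \<le> snd (omega t) u"
    using D vot_nonneg by (intro AE_PiM_all_components) auto
  have "0 \<le> Max (range c)" "0 \<le> Max (range lam)"
    using c_nonneg lam_nonneg by (simp_all add: Max_range_nonneg)
  then show ?thesis
    using vot played_regret_le[OF c_nonneg sel_eq]
      played_violation_le[OF sel_eq _ l_nonneg lam_nonneg c_nonneg]
    by (intro conjI product.integral_le_nonneg_const) (auto elim!: eventually_mono)
qed

end
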